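(* Let $p\in(1,\infty)$ and let $X$ be a Banach space with the $p$-Banach-Saks property which does not contain (an isomorphic copy of) $\ell_1$. Then $X$ has the alternating Banach-Saks property. In particular, if $X$ is also reflexive, then $X$ has the Banach-Saks property.
   Context: A Banach space $X$ has the $p$-Banach-Saks property if for every semi-normalized (bounded and bounded away from $0$) weakly null sequence $(x_n)$ in $X$ there exist a subsequence $(x_{n_j})$ and $c>0$ such that $\|x_{n_{j_1}}+\dots+x_{n_{j_k}}\|\le ck^{1/p}$ for all $k\in\mathbb N$ and all $k\le j_1<\dots<j_k$. $X$ has the Banach-Saks property if every bounded sequence $(x_n)$ has a subsequence $(x_{n_j})$ with $(\frac1k\sum_{j=1}^kx_{n_j})_k$ norm convergent; $X$ has the alternating Banach-Saks property if every bounded sequence $(x_n)$ has a subsequence $(x_{n_j})$ and signs $(\varepsilon_j)\in\{-1,1\}^{\mathbb N}$ with $(\frac1k\sum_{j=1}^k\varepsilon_jx_{n_j})_k$ norm convergent. *)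

theory Defs
  imports "HOL-Analysis.Analysis"
begin

text \<open>Banach spaces are modelled as real Banach spaces, i.e. types of class banach.\<close>

definition weakly_null :: "(nat \<Rightarrow> 'a::real_normed_vector) \<Rightarrow> bool" where
  "weakly_null x \<longleftrightarrow> (\<forall>f :: 'a \<Rightarrow> real. bounded_linear f \<longrightarrow> (\<lambda>n. f (x n)) \<longlonglongrightarrow> 0)"

definition semi_normalized :: "(nat \<Rightarrow> 'a::real_normed_vector) \<Rightarrow> bool" where
  "semi_normalized x \<longleftrightarrow> (\<exists>a b. 0 < a \<and> (\<forall>n. a \<le> norm (x n) \<and> norm (x n) \<le> b))"

text \<open>p-Banach-Saks property: the subsequence is (x (r j)) indexed by j, and the
  finite index sets F = {j_1 < ... < j_k} satisfy k \<le> j_1.\<close>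
definition p_Banach_Saks :: "real \<Rightarrow> 'a::real_normed_vector itself \<Rightarrow> bool" where
  "p_Banach_Saks p _ \<longleftrightarrow>
     (\<forall>x :: nat \<Rightarrow> 'a. semi_normalized x \<and> weakly_null x \<longrightarrow>
        (\<exists>r c. strict_mono r \<and> c > 0 \<and>
           (\<forall>F. finite F \<and> F \<noteq> {} \<and> card F \<le> Min F \<longrightarrow>
              norm (\<Sum>j\<in>F. x (r j)) \<le> c * real (card F) powr (1 / p))))"

definition Banach_Saks :: "'a::real_normed_vector itself \<Rightarrow> bool" where
  "Banach_Saks _ \<longleftrightarrow>
     (\<forall>x :: nat \<Rightarrow> 'a. bounded (range x) \<longrightarrow>
        (\<exists>r. strict_mono r \<and>
           convergent (\<lambda>k. (1 / real (Suc k)) *\<^sub>R (\<Sum>j\<le>k. x (r j)))))"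

definition alternating_Banach_Saks :: "'a::real_normed_vector itself \<Rightarrow> bool" where
  "alternating_Banach_Saks _ \<longleftrightarrow>
     (\<forall>x :: nat \<Rightarrow> 'a. bounded (range x) \<longrightarrow>
        (\<exists>r \<epsilon>. strict_mono r \<and> (\<forall>j. \<epsilon> j \<in> {-1, 1::real}) \<and>
           convergent (\<lambda>k. (1 / real (Suc k)) *\<^sub>R (\<Sum>j\<le>k. \<epsilon> j *\<^sub>R x (r j)))))"

definition ell1 :: "(nat \<Rightarrow> real) set" where
  "ell1 = {a. summable (\<lambda>n. \<bar>a n\<bar>)}"

definition ell1_norm :: "(nat \<Rightarrow> real) \<Rightarrow> real" where
  "ell1_norm a = (\<Sum>n. \<bar>a n\<bar>)"

definition contains_ell1 :: "'a::real_normed_vector itself \<Rightarrow> bool" where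
  "contains_ell1 _ \<longleftrightarrow>
     (\<exists>(T :: (nat \<Rightarrow> real) \<Rightarrow> 'a) c C. 0 < c \<and>
        (\<forall>a\<in>ell1. \<forall>b\<in>ell1. T (\<lambda>n. a n + b n) = T a + T b) \<and>
        (\<forall>a\<in>ell1. \<forall>t::real. T (\<lambda>n. t * a n) = t *\<^sub>R T a) \<and>
        (\<forall>a\<in>ell1. c * ell1_norm a \<le> norm (T a) \<and> norm (T a) \<le> C * ell1_norm a))"

definition reflexive_space :: "'a::real_normed_vector itself \<Rightarrow> bool" where
  "reflexive_space _ \<longleftrightarrow>
     (\<forall>\<phi> :: ('a \<Rightarrow>\<^sub>L real) \<Rightarrow>\<^sub>L real. \<exists>x::'a. \<forall>f. blinfun_apply \<phi> f = blinfun_apply f x)"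

end

theory Submission
  imports Defs
begin

text \<open>By Rosenthal's l1 theorem every bounded sequence in X has a weakly Cauchy subsequence z.
  The differences z (2j) - z (2j+1) are weakly null, so the p-Banach-Saks property (or, if their
  norms do not stay away from 0, summability of a subsequence) bounds the norms of their block sums
  by c k^(1/p); a dyadic splitting turns this into a bound D J^(1/p) for all partial sums.
  Interleaving the pairs with alternating signs recovers these partial sums, up to one bounded
  term, so the signed Cesaro means tend to 0. If X is reflexive, z converges weakly to some x0 and
  the same estimate for z - x0 shows that the plain Cesaro means converge to x0.

  Rosenthal's theorem comes from a dichotomy for the evaluations at x n on the dual unit ball:
  either a subsequence converges pointwise there, or a subsequence is Boolean independent at two
  levels a < b, and then it spans a copy of l1.\<close>

section \<open>Rosenthal's combinatorial lemma\<close>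

lemma infinite_greater_in:
  fixes L :: "nat set"
  assumes "infinite L"
  shows "infinite {l\<in>L. n < l}"
proof -
  have "{l\<in>L. n < l} = L - {..n}" by auto
  with assms show ?thesis by (simp add: Diff_infinite_finite)
qed

lemma infinite_image_strict_mono:
  assumes "strict_mono (r :: nat \<Rightarrow> nat)" "infinite S"
  shows "infinite (r ` S)"
  using assms finite_imageD strict_mono_imp_inj_on inj_on_subset by blast

lemma nested_infinite_sets_choice:
  fixes I :: "nat list \<Rightarrow> nat set \<Rightarrow> bool"
  assumes "infinite M" "I [] M"
    and step: "\<And>ns L. infinite L \<Longrightarrow> L \<subseteq> M \<Longrightarrow> I ns L \<Longrightarrow>
      \<exists>n\<in>L. \<exists>L'\<subseteq>L. infinite L' \<and> (\<forall>l\<in>L'. n < l) \<and> I (ns @ [n]) L'"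
  obtains r :: "nat \<Rightarrow> nat" and LL :: "nat \<Rightarrow> nat set"
  where "strict_mono r" "\<And>k. infinite (LL k)" "\<And>k. LL k \<subseteq> M"
    "\<And>k. I (map r [0..<k]) (LL k)" "\<And>j k. k \<le> j \<Longrightarrow> r j \<in> LL k"
proof -
  define P where "P k s \<longleftrightarrow> length (fst s) = k \<and> infinite (snd s) \<and> snd s \<subseteq> M \<and> I (fst s) (snd s)"
    for k and s :: "nat list \<times> nat set"
  define Q where "Q s s' \<longleftrightarrow> (\<exists>n\<in>snd s. fst s' = fst s @ [n] \<and> snd s' \<subseteq> snd s \<and> (\<forall>l\<in>snd s'. n < l))"
    for s s' :: "nat list \<times> nat set"
  have "\<exists>f. \<forall>k. P k (f k) \<and> Q (f k) (f (Suc k))"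
  proof (rule dependent_nat_choice)
    have "P 0 ([], M)" using assms(1,2) by (simp add: P_def)
    then show "\<exists>s. P 0 s" ..
  next
    fix s k assume "P k s"
    then obtain n L' where "n \<in> snd s" "L' \<subseteq> snd s" "infinite L'" "\<forall>l\<in>L'. n < l" "I (fst s @ [n]) L'"
      using step[of "snd s" "fst s"] by (auto simp: P_def)
    with \<open>P k s\<close> have "P (Suc k) (fst s @ [n], L') \<and> Q s (fst s @ [n], L')"
      by (auto simp: P_def Q_def)
    then show "\<exists>s'. P (Suc k) s' \<and> Q s s'" ..
  qed
  then obtain f where P: "\<And>k. P k (f k)" and Q: "\<And>k. Q (f k) (f (Suc k))" by blast
  define r where "r k = fst (f (Suc k)) ! k" for k
  define LL where "LL k = snd (f k)" for k
  have r_new: "fst (f (Suc k)) = fst (f k) @ [r k]" "r k \<in> LL k" "\<forall>l\<in>LL (Suc k). r k < l" for k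
    using P[of k] Q[of k] by (auto simp: P_def Q_def r_def LL_def nth_append)
  have prefix: "fst (f k) = map r [0..<k]" for k
    by (induction k) (use P[of 0] in \<open>simp_all add: P_def r_new(1)\<close>)
  have antimono: "LL j \<subseteq> LL k" if "k \<le> j" for j k
    using that by (induction j rule: dec_induct) (use Q in \<open>auto simp: Q_def LL_def\<close>)
  show thesis
  proof
    show "strict_mono r"
      unfolding strict_mono_Suc_iff using r_new(2,3) by blast
    show "r j \<in> LL k" if "k \<le> j" for j k
      using antimono[OF that] r_new(2) by blast
  qed (use P in \<open>auto simp: P_def LL_def prefix\<close>)
qed

lemma diagonal_infinite_sets_choice:
  assumes shrink: "\<And>k L. infinite L \<Longrightarrow> \<exists>L'\<subseteq>L. infinite L' \<and> P k L'"
  obtains r :: "nat \<Rightarrow> nat" and LL :: "nat \<Rightarrow> nat set"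
  where "strict_mono r" "\<And>k. P k (LL k)" "\<And>j k. k < j \<Longrightarrow> r j \<in> LL k"
proof -
  define I where "I ns L \<longleftrightarrow> ns \<noteq> [] \<longrightarrow> P (length ns - 1) L" for ns :: "nat list" and L
  have step: "\<exists>n\<in>L. \<exists>L'\<subseteq>L. infinite L' \<and> (\<forall>l\<in>L'. n < l) \<and> I (ns @ [n]) L'"
    if "infinite L" "L \<subseteq> UNIV" "I ns L" for ns L
  proof -
    obtain n where "n \<in> L" using \<open>infinite L\<close> by (metis finite.emptyI ex_in_conv)
    moreover obtain L' where "L' \<subseteq> {l\<in>L. n < l}" "infinite L'" "P (length ns) L'"
      using shrink[OF infinite_greater_in[OF \<open>infinite L\<close>]] by blast
    ultimately show ?thesis unfolding I_def by (intro bexI[of _ n] exI[of _ L']) auto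
  qed
  have "I [] UNIV" by (simp add: I_def)
  obtain r :: "nat \<Rightarrow> nat" and LL where r: "strict_mono r" "\<And>k. infinite (LL k)" "\<And>k. LL k \<subseteq> UNIV"
    "\<And>k. I (map r [0..<k]) (LL k)" "\<And>j k. k \<le> j \<Longrightarrow> r j \<in> LL k"
    using nested_infinite_sets_choice[OF infinite_UNIV_nat \<open>I [] UNIV\<close> step] by blast
  show thesis
  proof (rule that[OF r(1)])
    show "P k (LL (Suc k))" for k using r(4)[of "Suc k"] by (simp add: I_def)
    show "r j \<in> LL (Suc k)" if "k < j" for j k using r(5) that by (simp add: Suc_le_eq)
  qed
qed

definition oscillates_on :: "(nat \<Rightarrow> 's set) \<Rightarrow> (nat \<Rightarrow> 's set) \<Rightarrow> 's \<Rightarrow> nat set \<Rightarrow> bool" where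
  "oscillates_on A B t L \<longleftrightarrow> infinite {n\<in>L. t \<in> A n} \<and> infinite {n\<in>L. t \<in> B n}"

definition hereditarily_oscillating ::
    "(nat \<Rightarrow> 's set) \<Rightarrow> (nat \<Rightarrow> 's set) \<Rightarrow> 's set \<Rightarrow> nat set \<Rightarrow> bool" where
  "hereditarily_oscillating A B C M \<longleftrightarrow> (\<forall>L\<subseteq>M. infinite L \<longrightarrow> (\<exists>t\<in>C. oscillates_on A B t L))"

lemma oscillates_on_mono:
  assumes "oscillates_on A B t L" "finite F" "L - F \<subseteq> L'"
  shows "oscillates_on A B t L'"
proof -
  have "{n\<in>L. t \<in> A n} - F \<subseteq> {n\<in>L'. t \<in> A n}" "{n\<in>L. t \<in> B n} - F \<subseteq> {n\<in>L'. t \<in> B n}"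
    using assms(3) by auto
  with assms(1,2) show ?thesis
    unfolding oscillates_on_def by (meson Diff_infinite_finite infinite_super)
qed

lemma hereditarily_oscillating_pigeonhole:
  fixes r :: "nat \<Rightarrow> nat"
  assumes fin: "finite \<C>" and "strict_mono r" "range r \<subseteq> M"
    and osc: "\<forall>C\<in>\<C>. hereditarily_oscillating A B C M"
    and CC: "\<forall>k. CC k \<in> \<C>" and tail: "\<forall>j k. k < j \<longrightarrow> r j \<in> LL k"
  shows "\<exists>k. \<exists>t\<in>CC k \<inter> (if e k then A (r k) else B (r k)). oscillates_on A B t (LL k)"
proof -
  have "finite (range (\<lambda>k. (CC k, e k)))"
    by (rule finite_subset[of _ "\<C> \<times> UNIV"]) (use CC fin in auto)
  then obtain y where "infinite ((\<lambda>k. (CC k, e k)) -` {y})"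
    by (rule inf_img_fin_domE[OF _ infinite_UNIV_nat])
  moreover obtain C0 e0 where "y = (C0, e0)" by fastforce
  moreover define K where "K = {k. CC k = C0 \<and> e k = e0}"
  ultimately have "infinite K" by (simp add: vimage_def)
  then have "C0 \<in> \<C>" using CC unfolding K_def by (metis (mono_tags) empty_Collect_eq finite.emptyI)
  have "infinite (r ` K)" using infinite_image_strict_mono[OF \<open>strict_mono r\<close> \<open>infinite K\<close>] .
  moreover have "r ` K \<subseteq> M" using \<open>range r \<subseteq> M\<close> by blast
  ultimately obtain t where "t \<in> C0" and t: "oscillates_on A B t (r ` K)"
    using osc \<open>C0 \<in> \<C>\<close> unfolding hereditarily_oscillating_def by blast
  then have "infinite {m \<in> r ` K. t \<in> (if e0 then A m else B m)}"
    unfolding oscillates_on_def by (cases e0) auto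
  then have "{m \<in> r ` K. t \<in> (if e0 then A m else B m)} \<noteq> {}" by (metis finite.emptyI)
  then obtain k where "k \<in> K" "t \<in> (if e0 then A (r k) else B (r k))" by blast
  have "r ` K - r ` {..k} \<subseteq> LL k"
  proof
    fix m assume "m \<in> r ` K - r ` {..k}"
    then obtain j where "m = r j" "j \<notin> {..k}" by blast
    then show "m \<in> LL k" using tail by simp
  qed
  then have "oscillates_on A B t (LL k)" using t by (rule oscillates_on_mono[rotated 2]) simp
  moreover have "t \<in> CC k \<inter> (if e k then A (r k) else B (r k))"
    using \<open>k \<in> K\<close> \<open>t \<in> C0\<close> \<open>t \<in> (if e0 then A (r k) else B (r k))\<close> unfolding K_def by auto
  ultimately show ?thesis by blast
qed

text \<open>Were there no such n, a diagonal construction would produce a subsequence r together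
  with C k \<in> \<C> and a side of r k on whose intersection nothing oscillates along the tail
  after k; pigeonholing on these finitely many choices contradicts the hypothesis.\<close>
lemma hereditarily_oscillating_split:
  assumes fin: "finite \<C>" and "infinite M"
    and osc: "\<forall>C\<in>\<C>. hereditarily_oscillating A B C M"
  shows "\<exists>n\<in>M. \<exists>L\<subseteq>M. infinite L \<and> (\<forall>l\<in>L. n < l) \<and>
    (\<forall>C\<in>\<C>. hereditarily_oscillating A B (C \<inter> A n) L \<and> hereditarily_oscillating A B (C \<inter> B n) L)"
proof (rule ccontr)
  assume no_split: "\<not> ?thesis"
  define side where "side n e = (if e then A n else B n)" for n e
  define I where "I ns L \<longleftrightarrow>
    ns \<noteq> [] \<longrightarrow> (\<exists>C\<in>\<C>. \<exists>e. \<forall>t\<in>C \<inter> side (last ns) e. \<not> oscillates_on A B t L)" for ns L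
  have step: "\<exists>n\<in>L. \<exists>L'\<subseteq>L. infinite L' \<and> (\<forall>l\<in>L'. n < l) \<and> I (ns @ [n]) L'"
    if "infinite L" "L \<subseteq> M" "I ns L" for ns L
  proof -
    obtain n where "n \<in> L" using \<open>infinite L\<close> by (metis finite.emptyI ex_in_conv)
    define L0 where "L0 = {l\<in>L. n < l}"
    have "infinite L0" "L0 \<subseteq> M" "n \<in> M"
      using that \<open>n \<in> L\<close> infinite_greater_in unfolding L0_def by auto
    with no_split obtain C e L' where "C \<in> \<C>" "L' \<subseteq> L0" "infinite L'"
      "\<forall>t\<in>C \<inter> side n e. \<not> oscillates_on A B t L'"
      unfolding hereditarily_oscillating_def side_def L0_def by (smt (verit) mem_Collect_eq)
    with \<open>n \<in> L\<close> show ?thesis unfolding I_def L0_def by (intro bexI[of _ n] exI[of _ L']) auto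
  qed
  have "I [] M" by (simp add: I_def)
  obtain r LL where r: "strict_mono r" "\<And>k. infinite (LL k)" "\<And>k. LL k \<subseteq> M"
    "\<And>k. I (map r [0..<k]) (LL k)" "\<And>j k. k \<le> j \<Longrightarrow> r j \<in> LL k"
    using nested_infinite_sets_choice[OF \<open>infinite M\<close> \<open>I [] M\<close> step] by blast
  have "\<forall>k. \<exists>C\<in>\<C>. \<exists>e. \<forall>t\<in>C \<inter> side (r k) e. \<not> oscillates_on A B t (LL (Suc k))"
  proof
    fix k
    show "\<exists>C\<in>\<C>. \<exists>e. \<forall>t\<in>C \<inter> side (r k) e. \<not> oscillates_on A B t (LL (Suc k))"
      using r(4)[of "Suc k"] by (simp add: I_def)
  qed
  then obtain CC e where CC: "\<forall>k. CC k \<in> \<C>"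
    and not_osc: "\<And>k. \<forall>t\<in>CC k \<inter> side (r k) (e k). \<not> oscillates_on A B t (LL (Suc k))"
    by metis
  have "range r \<subseteq> M" using r(3,5) by blast
  have tail: "\<forall>j k. k < j \<longrightarrow> r j \<in> LL (Suc k)" using r(5) by (simp add: Suc_le_eq)
  obtain k t where "t \<in> CC k \<inter> side (r k) (e k)" "oscillates_on A B t (LL (Suc k))"
    using hereditarily_oscillating_pigeonhole[where LL = "\<lambda>k. LL (Suc k)",
        OF fin r(1) \<open>range r \<subseteq> M\<close> osc CC tail]
    unfolding side_def by blast
  with not_osc show False by blast
qed

definition cell :: "(nat \<Rightarrow> 's set) \<Rightarrow> (nat \<Rightarrow> 's set) \<Rightarrow> nat list \<Rightarrow> nat set \<Rightarrow> 's set" where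
  "cell A B ns P = {t. \<forall>i<length ns. (i \<in> P \<longrightarrow> t \<in> A (ns ! i)) \<and> (i \<notin> P \<longrightarrow> t \<in> B (ns ! i))}"

lemma finite_range_cell: "finite (range (cell A B ns))"
proof -
  have "cell A B ns P = cell A B ns (P \<inter> {..<length ns})" for P
    unfolding cell_def by auto
  then have "range (cell A B ns) = cell A B ns ` Pow {..<length ns}" by auto
  then show ?thesis by simp
qed

lemma cell_Nil [simp]: "cell A B [] P = UNIV"
  unfolding cell_def by simp

lemma cell_snoc:
  "cell A B (ns @ [n]) P = cell A B ns P \<inter> (if length ns \<in> P then A n else B n)"
  unfolding cell_def by (auto simp: nth_append less_Suc_eq)

lemma boolean_independent_subsequence:
  assumes "infinite M" "hereditarily_oscillating A B UNIV M"
  obtains r :: "nat \<Rightarrow> nat" where "strict_mono r"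
    "\<And>P Q. finite P \<Longrightarrow> finite Q \<Longrightarrow> P \<inter> Q = {} \<Longrightarrow> \<exists>t. (\<forall>i\<in>P. t \<in> A (r i)) \<and> (\<forall>i\<in>Q. t \<in> B (r i))"
proof -
  define I where "I ns L \<longleftrightarrow> (\<forall>P. hereditarily_oscillating A B (cell A B ns P) L)" for ns L
  have step: "\<exists>n\<in>L. \<exists>L'\<subseteq>L. infinite L' \<and> (\<forall>l\<in>L'. n < l) \<and> I (ns @ [n]) L'"
    if "infinite L" "L \<subseteq> M" "I ns L" for ns L
  proof -
    obtain n L' where "n \<in> L" "L' \<subseteq> L" "infinite L'" "\<forall>l\<in>L'. n < l" and split:
      "\<forall>C\<in>range (cell A B ns). hereditarily_oscillating A B (C \<inter> A n) L' \<and>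
         hereditarily_oscillating A B (C \<inter> B n) L'"
      using hereditarily_oscillating_split[OF finite_range_cell \<open>infinite L\<close>] \<open>I ns L\<close>
      unfolding I_def by blast
    have "I (ns @ [n]) L'" unfolding I_def cell_snoc using split by simp
    with \<open>n \<in> L\<close> \<open>L' \<subseteq> L\<close> \<open>infinite L'\<close> \<open>\<forall>l\<in>L'. n < l\<close> show ?thesis by blast
  qed
  have "I [] M" using assms(2) by (simp add: I_def)
  obtain r LL where r: "strict_mono r" "\<And>k. infinite (LL k)" "\<And>k. LL k \<subseteq> M"
    "\<And>k. I (map r [0..<k]) (LL k)" "\<And>j k. k \<le> j \<Longrightarrow> r j \<in> LL k"
    using nested_infinite_sets_choice[OF assms(1) \<open>I [] M\<close> step] by blast
  show thesis
  proof (rule that[OF r(1)])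
    fix P Q :: "nat set" assume "finite P" "finite Q" "P \<inter> Q = {}"
    then obtain k where k: "P \<union> Q \<subseteq> {..<k}" using finite_nat_bounded[of "P \<union> Q"] by blast
    obtain t where "t \<in> cell A B (map r [0..<k]) P"
      using r(2,4)[of k] unfolding I_def hereditarily_oscillating_def by blast
    with k \<open>P \<inter> Q = {}\<close> show "\<exists>t. (\<forall>i\<in>P. t \<in> A (r i)) \<and> (\<forall>i\<in>Q. t \<in> B (r i))"
      unfolding cell_def by (intro exI[of _ t]) auto
  qed
qed

section \<open>Rosenthal's l1 theorem\<close>

lemma infinite_if_eventually_on_subseq:
  fixes r :: "nat \<Rightarrow> nat"
  assumes "strict_mono r" "eventually (\<lambda>n. P (r n)) sequentially"
  shows "infinite {n. P n}"
proof -
  obtain N where "\<forall>n\<ge>N. P (r n)" using assms(2) unfolding eventually_sequentially by blast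
  then have "r ` {N..} \<subseteq> {n. P n}" by auto
  then show ?thesis using infinite_image_strict_mono[OF assms(1) infinite_Ici] infinite_super by blast
qed

text \<open>The limit l of a convergent subsequence is the limit: a sequence that keeps leaving a
  neighbourhood of l oscillates between two rationals, one on each side of the gap.\<close>
lemma convergent_if_no_rational_oscillation:
  fixes u :: "nat \<Rightarrow> real"
  assumes "bounded (range u)"
    and no_osc: "\<And>a b. a \<in> \<rat> \<Longrightarrow> b \<in> \<rat> \<Longrightarrow> a < b \<Longrightarrow> finite {n. u n < a} \<or> finite {n. b < u n}"
  shows "convergent u"
proof -
  obtain l r where r: "strict_mono r" "(u \<circ> r) \<longlonglongrightarrow> l"
    using bounded_imp_convergent_subsequence[OF assms(1)] by blast
  have "u \<longlonglongrightarrow> l"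
  proof (rule order_tendstoI)
    fix c assume "l < c"
    then obtain a b where ab: "a \<in> \<rat>" "b \<in> \<rat>" "l < a" "a < b" "b < c"
      by (metis Rats_dense_in_real dual_order.strict_trans)
    have "infinite {n. u n < a}"
      using infinite_if_eventually_on_subseq[OF r(1)] order_tendstoD(2)[OF r(2) \<open>l < a\<close>] by simp
    with no_osc[OF ab(1,2,4)] have "finite {n. b < u n}" by blast
    then have "finite {n. \<not> u n < c}" by (rule finite_subset[rotated]) (use ab in auto)
    then show "eventually (\<lambda>n. u n < c) sequentially"
      by (simp add: eventually_cofinite[symmetric] cofinite_eq_sequentially)
  next
    fix c assume "c < l"
    then obtain a b where ab: "a \<in> \<rat>" "b \<in> \<rat>" "c < a" "a < b" "b < l"
      by (metis Rats_dense_in_real dual_order.strict_trans)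
    have "infinite {n. b < u n}"
      using infinite_if_eventually_on_subseq[OF r(1)] order_tendstoD(1)[OF r(2) \<open>b < l\<close>] by simp
    with no_osc[OF ab(1,2,4)] have "finite {n. u n < a}" by blast
    then have "finite {n. \<not> c < u n}" by (rule finite_subset[rotated]) (use ab in auto)
    then show "eventually (\<lambda>n. c < u n) sequentially"
      by (simp add: eventually_cofinite[symmetric] cofinite_eq_sequentially)
  qed
  then show ?thesis unfolding convergent_def by blast
qed

definition dual_unit_ball :: "('a::real_normed_vector \<Rightarrow> real) set" where
  "dual_unit_ball = {f. bounded_linear f \<and> (\<forall>y. \<bar>f y\<bar> \<le> norm y)}"

definition dual_below :: "(nat \<Rightarrow> 'a::real_normed_vector) \<Rightarrow> real \<Rightarrow> nat \<Rightarrow> ('a \<Rightarrow> real) set" where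
  "dual_below x a n = {f\<in>dual_unit_ball. f (x n) < a}"

definition dual_above :: "(nat \<Rightarrow> 'a::real_normed_vector) \<Rightarrow> real \<Rightarrow> nat \<Rightarrow> ('a \<Rightarrow> real) set" where
  "dual_above x b n = {f\<in>dual_unit_ball. b < f (x n)}"

definition boolean_independent :: "(nat \<Rightarrow> 'a::real_normed_vector) \<Rightarrow> real \<Rightarrow> real \<Rightarrow> bool" where
  "boolean_independent y a b \<longleftrightarrow> a < b \<and>
    (\<forall>P Q. finite P \<longrightarrow> finite Q \<longrightarrow> P \<inter> Q = {} \<longrightarrow>
      (\<exists>f\<in>dual_unit_ball. (\<forall>i\<in>P. f (y i) < a) \<and> (\<forall>i\<in>Q. b < f (y i))))"

lemma zero_in_dual_unit_ball: "(\<lambda>_. 0) \<in> dual_unit_ball"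
  unfolding dual_unit_ball_def by (simp add: bounded_linear_zero)

lemma dual_unit_ball_abs_le: "f \<in> dual_unit_ball \<Longrightarrow> \<bar>f y\<bar> \<le> norm y"
  unfolding dual_unit_ball_def by blast

lemma scaled_in_dual_unit_ball:
  assumes "bounded_linear f"
  obtains c where "c > 0" "(\<lambda>y. f y / c) \<in> dual_unit_ball"
proof -
  obtain c where c: "c > 0" "\<And>y. norm (f y) \<le> norm y * c"
    using bounded_linear.pos_bounded[OF assms] by blast
  have "bounded_linear (\<lambda>y. f y / c)"
    using bounded_linear_compose[OF bounded_linear_divide[of c] assms] by (simp add: o_def)
  moreover have "\<bar>f y / c\<bar> \<le> norm y" for y
    using c by (simp add: abs_divide divide_le_eq)
  ultimately show thesis using that c(1) unfolding dual_unit_ball_def by blast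
qed

lemma boolean_independent_if_hereditarily_oscillating:
  fixes x :: "nat \<Rightarrow> 'a::real_normed_vector"
  assumes "infinite M" "a < b"
    and "hereditarily_oscillating (dual_below x a) (dual_above x b) UNIV M"
  obtains r where "strict_mono r" "boolean_independent (x \<circ> r) a b"
proof -
  obtain r :: "nat \<Rightarrow> nat" where r: "strict_mono r" and indep: "\<And>P Q. finite P \<Longrightarrow> finite Q \<Longrightarrow> P \<inter> Q = {} \<Longrightarrow>
      \<exists>f. (\<forall>i\<in>P. f \<in> dual_below x a (r i)) \<and> (\<forall>i\<in>Q. f \<in> dual_above x b (r i))"
    by (fact boolean_independent_subsequence[OF assms(1,3)])
  have indep': "\<exists>f\<in>dual_unit_ball. (\<forall>i\<in>P. f (x (r i)) < a) \<and> (\<forall>i\<in>Q. b < f (x (r i)))"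
    if "finite P" "finite Q" "P \<inter> Q = {}" for P Q
  proof (cases "P = {} \<and> Q = {}")
    case True
    then show ?thesis using zero_in_dual_unit_ball by blast
  next
    case False
    with indep[OF that] show ?thesis unfolding dual_below_def dual_above_def by blast
  qed
  show thesis
  proof (rule that[OF r])
    show "boolean_independent (x \<circ> r) a b"
      unfolding boolean_independent_def using assms(2) indep' by simp
  qed
qed

lemma one_side_finite_if_not_oscillating:
  fixes r :: "nat \<Rightarrow> nat"
  assumes "strict_mono r" and tail: "\<And>j. k < j \<Longrightarrow> r j \<in> L" and "f \<in> dual_unit_ball"
    and not_osc: "\<not> oscillates_on (dual_below x a) (dual_above x b) f L"
  shows "finite {n. f (x (r n)) < a} \<or> finite {n. b < f (x (r n))}"
proof (rule ccontr)
  have tail_image: "r ` (S - {..k}) \<subseteq> L" for S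
  proof
    fix m assume "m \<in> r ` (S - {..k})"
    then obtain j where "j \<in> S - {..k}" "m = r j" by blast
    then show "m \<in> L" using tail[of j] by simp
  qed
  have infinite_tail: "infinite (r ` (S - {..k}))" if "infinite S" for S
    using infinite_image_strict_mono[OF assms(1) Diff_infinite_finite[OF finite_atMost that]] .
  assume "\<not> ?thesis"
  then have "infinite (r ` ({n. f (x (r n)) < a} - {..k}))"
    "infinite (r ` ({n. b < f (x (r n))} - {..k}))"
    using infinite_tail by blast+
  moreover have "r ` ({n. f (x (r n)) < a} - {..k}) \<subseteq> {m\<in>L. f \<in> dual_below x a m}"
    using tail_image[of "{n. f (x (r n)) < a}"] \<open>f \<in> dual_unit_ball\<close> by (auto simp: dual_below_def)
  moreover have "r ` ({n. b < f (x (r n))} - {..k}) \<subseteq> {m\<in>L. f \<in> dual_above x b m}"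
    using tail_image[of "{n. b < f (x (r n))}"] \<open>f \<in> dual_unit_ball\<close> by (auto simp: dual_above_def)
  ultimately have "oscillates_on (dual_below x a) (dual_above x b) f L"
    unfolding oscillates_on_def by (metis infinite_super)
  with not_osc show False ..
qed

text \<open>Diagonalize over an enumeration of all pairs of rationals a < b, passing for each pair to an
  infinite set on which no functional oscillates between the levels a and b.\<close>
lemma dual_convergent_subsequence_if_not_oscillating:
  fixes x :: "nat \<Rightarrow> 'a::real_normed_vector"
  assumes "bounded (range x)"
    and not_osc: "\<And>M a b. infinite M \<Longrightarrow> a < b \<Longrightarrow>
      \<not> hereditarily_oscillating (dual_below x a) (dual_above x b) UNIV M"
  obtains r where "strict_mono r" "\<And>f. f \<in> dual_unit_ball \<Longrightarrow> convergent (\<lambda>n. f (x (r n)))"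
proof -
  define a :: "nat \<Rightarrow> real" where "a k = of_rat (fst (from_nat k :: rat \<times> rat))" for k
  define b :: "nat \<Rightarrow> real" where "b k = of_rat (snd (from_nat k :: rat \<times> rat))" for k
  define good where "good k L \<longleftrightarrow>
    (a k < b k \<longrightarrow> (\<forall>f. \<not> oscillates_on (dual_below x (a k)) (dual_above x (b k)) f L))" for k L
  have shrink: "\<exists>L'\<subseteq>L. infinite L' \<and> good k L'" if "infinite L" for k L
  proof (cases "a k < b k")
    case True
    with not_osc[OF that True] show ?thesis unfolding good_def hereditarily_oscillating_def by blast
  qed (use that good_def in blast)
  obtain r :: "nat \<Rightarrow> nat" and LL where r: "strict_mono r" "\<And>k. good k (LL k)"
    "\<And>j k. k < j \<Longrightarrow> r j \<in> LL k"
    using diagonal_infinite_sets_choice[of good, OF shrink] by blast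
  obtain K where K: "\<And>n. norm (x n) \<le> K" using assms(1) unfolding bounded_iff by auto
  have "convergent (\<lambda>n. f (x (r n)))" if f: "f \<in> dual_unit_ball" for f
  proof (rule convergent_if_no_rational_oscillation)
    have "\<bar>f (x (r n))\<bar> \<le> K" for n
      using dual_unit_ball_abs_le[OF f, of "x (r n)"] K[of "r n"] by linarith
    then show "bounded (range (\<lambda>n. f (x (r n))))" unfolding bounded_iff by auto
  next
    fix \<alpha> \<beta> :: real assume "\<alpha> \<in> \<rat>" "\<beta> \<in> \<rat>" "\<alpha> < \<beta>"
    then obtain \<alpha>' \<beta>' where "\<alpha> = of_rat \<alpha>'" "\<beta> = of_rat \<beta>'" by (metis Rats_cases)
    then have "a (to_nat (\<alpha>', \<beta>')) = \<alpha>" "b (to_nat (\<alpha>', \<beta>')) = \<beta>"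
      unfolding a_def b_def by simp_all
    then have "\<not> oscillates_on (dual_below x \<alpha>) (dual_above x \<beta>) f (LL (to_nat (\<alpha>', \<beta>')))"
      using r(2) \<open>\<alpha> < \<beta>\<close> unfolding good_def by metis
    then show "finite {n. f (x (r n)) < \<alpha>} \<or> finite {n. \<beta> < f (x (r n))}"
      using one_side_finite_if_not_oscillating[OF r(1) r(3) f] by blast
  qed
  with r(1) show thesis using that by blast
qed

lemma rosenthal_dichotomy:
  fixes x :: "nat \<Rightarrow> 'a::real_normed_vector"
  assumes "bounded (range x)"
  obtains r where "strict_mono r" "\<And>f. f \<in> dual_unit_ball \<Longrightarrow> convergent (\<lambda>n. f (x (r n)))"
  | r a b where "strict_mono r" "boolean_independent (x \<circ> r) a b"
proof (cases "\<exists>M a b. infinite M \<and> a < b \<and>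
    hereditarily_oscillating (dual_below x a) (dual_above x b) UNIV M")
  case True
  then obtain M a b where "infinite M" "a < b"
    "hereditarily_oscillating (dual_below x a) (dual_above x b) UNIV M" by blast
  then show thesis by (rule boolean_independent_if_hereditarily_oscillating) (rule that(2))
next
  case False
  then show thesis
    by (rule_tac dual_convergent_subsequence_if_not_oscillating[OF assms]) (blast, rule that(1))
qed

lemma bounded_linear_sum_scaleR:
  assumes "bounded_linear f"
  shows "f (\<Sum>i\<in>S. c i *\<^sub>R y i) = (\<Sum>i\<in>S. c i * f (y i))"
  using bounded_linear.linear[OF assms] by (simp add: linear_sum linear_cmul)

text \<open>Test the sum against a functional that is large on the y i with nonnegative coefficient
  and small on the others, and against one doing the opposite.\<close>
lemma boolean_independent_l1_lower_bound:
  assumes "boolean_independent y a b"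
  shows "(b - a) * (\<Sum>i<N. \<bar>c i\<bar>) \<le> 2 * norm (\<Sum>i<N. c i *\<^sub>R y i)"
proof -
  define P where "P = {i. i < N \<and> 0 \<le> c i}"
  define Q where "Q = {i. i < N \<and> c i < 0}"
  have "finite P" "finite Q" "P \<inter> Q = {}" "Q \<inter> P = {}" unfolding P_def Q_def by auto
  then obtain f g where f: "f \<in> dual_unit_ball" "\<forall>i\<in>Q. f (y i) < a" "\<forall>i\<in>P. b < f (y i)"
    and g: "g \<in> dual_unit_ball" "\<forall>i\<in>P. g (y i) < a" "\<forall>i\<in>Q. b < g (y i)"
    using assms unfolding boolean_independent_def by (metis (no_types, lifting))
  define S where "S = (\<Sum>i<N. c i *\<^sub>R y i)"
  have termwise: "\<bar>c i\<bar> * (b - a) \<le> c i * (f (y i) - g (y i))" if "i < N" for i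
  proof (cases "0 \<le> c i")
    case True
    then have "b - a \<le> f (y i) - g (y i)" using f g that unfolding P_def by fastforce
    then show ?thesis using True by (simp add: mult_left_mono)
  next
    case False
    then have "f (y i) - g (y i) \<le> a - b" using f g that unfolding Q_def by fastforce
    then have "c i * (a - b) \<le> c i * (f (y i) - g (y i))" using False by (simp add: mult_left_mono_neg)
    then show ?thesis using False by (simp add: algebra_simps)
  qed
  have "(b - a) * (\<Sum>i<N. \<bar>c i\<bar>) = (\<Sum>i<N. \<bar>c i\<bar> * (b - a))"
    by (simp add: sum_distrib_left mult.commute)
  also have "\<dots> \<le> (\<Sum>i<N. c i * (f (y i) - g (y i)))"
    using termwise by (intro sum_mono) auto
  also have "\<dots> = f S - g S"
    using f(1) g(1) unfolding S_def dual_unit_ball_def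
    by (simp add: bounded_linear_sum_scaleR algebra_simps sum_subtractf)
  also have "\<dots> \<le> 2 * norm S"
    using dual_unit_ball_abs_le[OF f(1), of S] dual_unit_ball_abs_le[OF g(1), of S] by linarith
  finally show ?thesis unfolding S_def .
qed

lemma contains_ell1_if_boolean_independent:
  fixes y :: "nat \<Rightarrow> 'a::banach"
  assumes "bounded (range y)" and indep: "boolean_independent y a b"
  shows "contains_ell1 TYPE('a)"
proof -
  obtain K where K: "\<And>n. norm (y n) \<le> K" using assms(1) unfolding bounded_iff by auto
  define T where "T c = (\<Sum>i. c i *\<^sub>R y i)" for c :: "nat \<Rightarrow> real"
  have abs_summable: "summable (\<lambda>i. norm (c i *\<^sub>R y i))" if "c \<in> ell1" for c
  proof (rule summable_comparison_test')
    show "summable (\<lambda>i. \<bar>c i\<bar> * K)" using that unfolding ell1_def by (simp add: summable_mult2)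
    show "norm (norm (c n *\<^sub>R y n)) \<le> \<bar>c n\<bar> * K" for n using K[of n] by (simp add: mult_left_mono)
  qed
  have summable: "summable (\<lambda>i. c i *\<^sub>R y i)" if "c \<in> ell1" for c
    using summable_norm_cancel[OF abs_summable[OF that]] .
  have "T (\<lambda>n. c n + d n) = T c + T d" if "c \<in> ell1" "d \<in> ell1" for c d
    unfolding T_def using suminf_add[OF summable[OF that(1)] summable[OF that(2)]]
    by (simp add: scaleR_add_left)
  moreover have "T (\<lambda>n. s * c n) = s *\<^sub>R T c" if "c \<in> ell1" for c s
    unfolding T_def using suminf_scaleR_right[OF summable[OF that], of s] by simp
  moreover have "norm (T c) \<le> K * ell1_norm c" if "c \<in> ell1" for c
  proof -
    have "summable (\<lambda>i. \<bar>c i\<bar>)" using that unfolding ell1_def by simp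
    have "norm (T c) \<le> (\<Sum>i. norm (c i *\<^sub>R y i))"
      unfolding T_def by (rule summable_norm[OF abs_summable[OF that]])
    also have "\<dots> \<le> (\<Sum>i. \<bar>c i\<bar> * K)"
      by (rule suminf_le) (use K abs_summable[OF that] \<open>summable (\<lambda>i. \<bar>c i\<bar>)\<close>
        in \<open>auto simp: mult_left_mono summable_mult2\<close>)
    also have "\<dots> = K * ell1_norm c"
      unfolding ell1_norm_def using suminf_mult2[OF \<open>summable (\<lambda>i. \<bar>c i\<bar>)\<close>, of K]
      by (simp add: mult.commute)
    finally show ?thesis .
  qed
  moreover have "(b - a) / 2 * ell1_norm c \<le> norm (T c)" if "c \<in> ell1" for c
  proof (rule LIMSEQ_le)
    show "(\<lambda>N. (b - a) / 2 * (\<Sum>i<N. \<bar>c i\<bar>)) \<longlonglongrightarrow> (b - a) / 2 * ell1_norm c"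
      using that unfolding ell1_norm_def ell1_def by (intro tendsto_mult tendsto_const summable_LIMSEQ) simp
    show "(\<lambda>N. norm (\<Sum>i<N. c i *\<^sub>R y i)) \<longlonglongrightarrow> norm (T c)"
      unfolding T_def by (intro tendsto_norm summable_LIMSEQ summable that)
    show "\<exists>N. \<forall>n\<ge>N. (b - a) / 2 * (\<Sum>i<n. \<bar>c i\<bar>) \<le> norm (\<Sum>i<n. c i *\<^sub>R y i)"
      using boolean_independent_l1_lower_bound[OF indep] by (simp add: field_simps)
  qed
  moreover have "0 < (b - a) / 2" using indep unfolding boolean_independent_def by simp
  ultimately show ?thesis unfolding contains_ell1_def by (intro exI[of _ T] exI[of _ "(b - a) / 2"] exI[of _ K]) blast
qed

definition weakly_Cauchy :: "(nat \<Rightarrow> 'a::real_normed_vector) \<Rightarrow> bool" where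
  "weakly_Cauchy x \<longleftrightarrow> (\<forall>f :: 'a \<Rightarrow> real. bounded_linear f \<longrightarrow> convergent (\<lambda>n. f (x n)))"

theorem rosenthal_ell1_theorem:
  fixes x :: "nat \<Rightarrow> 'a::banach"
  assumes "\<not> contains_ell1 TYPE('a)" "bounded (range x)"
  obtains r where "strict_mono r" "weakly_Cauchy (x \<circ> r)"
  using assms(2)
proof (cases rule: rosenthal_dichotomy)
  case (1 r)
  have "convergent (\<lambda>n. f (x (r n)))" if f: "bounded_linear f" for f :: "'a \<Rightarrow> real"
  proof -
    obtain c where "c > 0" "(\<lambda>y. f y / c) \<in> dual_unit_ball"
      using scaled_in_dual_unit_ball[OF f] by blast
    then have "convergent (\<lambda>n. f (x (r n)) / c)" using 1(2)[of "\<lambda>y. f y / c"] by simp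
    then have "convergent (\<lambda>n. c * (f (x (r n)) / c))"
      using convergent_mult_const_iff[of c "\<lambda>n. f (x (r n)) / c"] \<open>c > 0\<close> by simp
    with \<open>c > 0\<close> show ?thesis by simp
  qed
  with 1(1) show thesis using that unfolding weakly_Cauchy_def by simp
next
  case (2 r a b)
  have "bounded (range (x \<circ> r))" using assms(2) by (rule bounded_subset) auto
  then have "contains_ell1 TYPE('a)" using 2(2) by (rule contains_ell1_if_boolean_independent)
  with assms(1) show thesis by contradiction
qed

section \<open>Cesaro means in spaces with the p-Banach-Saks property\<close>

text \<open>Split {..<J} at m = (J + 1) div 2: the upper half {m..<J} is an admissible block, as its
  size is at most its minimum m, and m \<le> 3J/4 lets the induction hypothesis absorb it.\<close>
lemma partial_sums_powr_bound_from_blocks: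
  fixes w :: "nat \<Rightarrow> 'a::real_normed_vector"
  assumes "0 < \<theta>" "0 \<le> c"
    and blocks: "\<And>F. finite F \<Longrightarrow> F \<noteq> {} \<Longrightarrow> card F \<le> Min F \<Longrightarrow>
      norm (\<Sum>j\<in>F. w j) \<le> c * real (card F) powr \<theta>"
  shows "norm (\<Sum>j<J. w j) \<le> max (norm (w 0)) (c / (1 - (3/4) powr \<theta>)) * real J powr \<theta>"
proof (induction J rule: less_induct)
  case (less J)
  define D where "D = max (norm (w 0)) (c / (1 - (3/4) powr \<theta>))"
  have q: "(3/4::real) powr \<theta> < 1" using powr_less_mono2[of \<theta> "3/4" 1] assms(1) by simp
  have "0 \<le> D" unfolding D_def by (simp add: le_max_iff_disj)
  have "c / (1 - (3/4) powr \<theta>) \<le> D" unfolding D_def by simp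
  then have cD: "c \<le> D * (1 - (3/4) powr \<theta>)" using q by (simp add: pos_divide_le_eq)
  show ?case
  proof (cases "J \<le> 1")
    case True
    then show ?thesis by (cases J) auto
  next
    case False
    define m where "m = (J + 1) div 2"
    have m: "1 \<le> m" "m < J" "J - m \<le> m" "real m \<le> 3/4 * real J" using False unfolding m_def by linarith+
    have "{..<J} = {..<m} \<union> {m..<J}" using m by auto
    then have "norm (\<Sum>j<J. w j) \<le> norm (\<Sum>j<m. w j) + norm (\<Sum>j\<in>{m..<J}. w j)"
      by (simp add: sum.union_disjoint norm_triangle_ineq ivl_disj_int(2))
    moreover have "norm (\<Sum>j<m. w j) \<le> D * real m powr \<theta>" using less m(2) unfolding D_def by blast
    moreover have "norm (\<Sum>j\<in>{m..<J}. w j) \<le> c * real (J - m) powr \<theta>"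
    proof -
      have "Min {m..<J} = m" using m(2) by (intro Min_eqI) auto
      then show ?thesis using blocks[of "{m..<J}"] m by simp
    qed
    moreover have "real m powr \<theta> \<le> (3/4) powr \<theta> * real J powr \<theta>"
    proof -
      have "real m powr \<theta> \<le> (3/4 * real J) powr \<theta>" by (rule powr_mono2) (use m assms(1) in auto)
      also have "\<dots> = (3/4) powr \<theta> * real J powr \<theta>" by (rule powr_mult)
      finally show ?thesis .
    qed
    moreover have "real (J - m) powr \<theta> \<le> real J powr \<theta>"
      by (rule powr_mono2) (use assms(1) in auto)
    ultimately have "norm (\<Sum>j<J. w j) \<le> D * ((3/4) powr \<theta> * real J powr \<theta>) + c * real J powr \<theta>"
      using \<open>0 \<le> D\<close> assms(2) by (smt (verit) mult_left_mono)
    also have "\<dots> \<le> D * real J powr \<theta>"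
      using mult_right_mono[OF cD, of "real J powr \<theta>"] by (simp add: algebra_simps)
    finally show ?thesis unfolding D_def .
  qed
qed

lemma bounded_partial_sums_subsequence:
  fixes u :: "nat \<Rightarrow> 'a::real_normed_vector"
  assumes small: "\<And>\<delta> N. \<delta> > 0 \<Longrightarrow> \<exists>n\<ge>N. norm (u n) < \<delta>"
  obtains s :: "nat \<Rightarrow> nat" where "strict_mono s" "\<And>J. norm (\<Sum>j<J. u (s j)) \<le> 2"
proof -
  have "\<exists>s. \<forall>j. norm (u (s j)) < (1/2)^j \<and> s j < s (Suc j)"
  proof (rule dependent_nat_choice)
    show "\<exists>n. norm (u n) < (1/2)^0" using small[of 1 0] by auto
    show "\<exists>n'. norm (u n') < (1/2)^Suc j \<and> n < n'" for n j
      using small[of "(1/2)^Suc j" "Suc n"] by (auto simp: Suc_le_eq)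
  qed
  then obtain s where s: "\<And>j. norm (u (s j)) < (1/2)^j" "\<And>j. s j < s (Suc j)" by blast
  have bound: "norm (\<Sum>j<J. u (s j)) \<le> 2" for J
  proof -
    have "norm (\<Sum>j<J. u (s j)) \<le> (\<Sum>j<J. (1/2::real)^j)"
      by (rule sum_norm_le) (use s(1) in \<open>auto intro: less_imp_le\<close>)
    also have "\<dots> = 2 - 2 * (1/2)^J" using sum_gp_strict[of "1/2::real" J] by simp
    also have "\<dots> \<le> 2" by simp
    finally show ?thesis .
  qed
  have "strict_mono s" using s(2) by (simp add: strict_mono_Suc_iff)
  then show thesis using bound by (rule that)
qed

text \<open>Either u is bounded away from zero on a tail, and the p-Banach-Saks property applies to
  that tail, or u has a subsequence with summable norms.\<close>
lemma weakly_null_subsequence_partial_sums_powr_bound: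
  fixes u :: "nat \<Rightarrow> 'a::real_normed_vector"
  assumes p: "1 < p" and pbs: "p_Banach_Saks p TYPE('a)"
    and wn: "weakly_null u" and bnd: "bounded (range u)"
  obtains s D \<theta> where "strict_mono s" "0 \<le> D" "0 \<le> \<theta>" "\<theta> < 1"
    "\<And>J. norm (\<Sum>j<J. u (s j)) \<le> D * real J powr \<theta>"
proof (cases "\<exists>\<delta>>0. \<exists>N. \<forall>n\<ge>N. \<delta> \<le> norm (u n)")
  case True
  then obtain \<delta> N where \<delta>: "\<delta> > 0" "\<forall>n\<ge>N. \<delta> \<le> norm (u n)" by blast
  obtain K where K: "\<And>n. norm (u n) \<le> K" using bnd unfolding bounded_iff by auto
  define v where "v n = u (n + N)" for n
  have "semi_normalized v" unfolding semi_normalized_def v_def using \<delta> K by force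
  moreover have "weakly_null v"
    unfolding weakly_null_def v_def
    using wn[unfolded weakly_null_def] LIMSEQ_ignore_initial_segment by blast
  ultimately have "\<exists>r c. strict_mono r \<and> c > 0 \<and> (\<forall>F. finite F \<and> F \<noteq> {} \<and> card F \<le> Min F \<longrightarrow>
      norm (\<Sum>j\<in>F. v (r j)) \<le> c * real (card F) powr (1 / p))"
    using pbs unfolding p_Banach_Saks_def by blast
  then obtain r c where r: "strict_mono r" "c > 0"
    "\<forall>F. finite F \<and> F \<noteq> {} \<and> card F \<le> Min F \<longrightarrow>
      norm (\<Sum>j\<in>F. v (r j)) \<le> c * real (card F) powr (1 / p)"
    by blast
  define D where "D = max (norm (v (r 0))) (c / (1 - (3/4) powr (1 / p)))"
  have "norm (\<Sum>j<J. u (r j + N)) \<le> D * real J powr (1 / p)" for J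
    using partial_sums_powr_bound_from_blocks[of "1 / p" c "\<lambda>j. v (r j)"] p r
    unfolding D_def v_def by simp
  moreover have "strict_mono (\<lambda>j. r j + N)" using r(1) unfolding strict_mono_def by simp
  moreover have "0 \<le> D" unfolding D_def by (simp add: le_max_iff_disj)
  ultimately show thesis using p that[of "\<lambda>j. r j + N" D "1 / p"] by simp
next
  case False
  then have small: "\<exists>n\<ge>N. norm (u n) < \<delta>" if "\<delta> > 0" for \<delta> N using that not_less by blast
  obtain s :: "nat \<Rightarrow> nat" where "strict_mono s" "\<And>J. norm (\<Sum>j<J. u (s j)) \<le> 2"
    using bounded_partial_sums_subsequence[OF small] by blast
  then show thesis using that[of s 2 0] by simp
qed

lemma Cesaro_means_tendsto_zero:
  fixes g :: "nat \<Rightarrow> 'a::real_normed_vector"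
  assumes "\<And>k. norm (g k) \<le> D * real (Suc k) powr \<theta> + E" and "\<theta> < 1"
  shows "(\<lambda>k. (1 / real (Suc k)) *\<^sub>R g k) \<longlonglongrightarrow> 0"
proof (rule Lim_null_comparison)
  have "filterlim (\<lambda>k. real (Suc k)) at_top sequentially"
    using filterlim_real_sequentially filterlim_sequentially_Suc[of real at_top] by simp
  then have "(\<lambda>k. D * real (Suc k) powr (\<theta> - 1) + E * real (Suc k) powr (-1)) \<longlonglongrightarrow> D * 0 + E * 0"
    by (intro tendsto_add tendsto_mult tendsto_const tendsto_neg_powr) (use assms(2) in auto)
  then show "(\<lambda>k. D * real (Suc k) powr (\<theta> - 1) + E * real (Suc k) powr (-1)) \<longlonglongrightarrow> 0" by simp
  have "norm ((1 / real (Suc k)) *\<^sub>R g k) \<le> D * real (Suc k) powr (\<theta> - 1) + E * real (Suc k) powr (-1)"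
    for k
  proof -
    have "norm ((1 / real (Suc k)) *\<^sub>R g k) = norm (g k) / real (Suc k)" by simp
    also have "\<dots> \<le> (D * real (Suc k) powr \<theta> + E) / real (Suc k)"
      using assms(1) by (simp add: divide_right_mono)
    also have "\<dots> = D * real (Suc k) powr (\<theta> - 1) + E * real (Suc k) powr (-1)"
      by (simp add: powr_diff powr_minus divide_inverse algebra_simps)
    finally show ?thesis .
  qed
  then show "\<forall>\<^sub>F k in sequentially. norm ((1 / real (Suc k)) *\<^sub>R g k)
      \<le> D * real (Suc k) powr (\<theta> - 1) + E * real (Suc k) powr (-1)" by simp
qed

lemma weakly_null_pair_differences:
  assumes "weakly_Cauchy z"
  shows "weakly_null (\<lambda>j. z (2 * j) - z (2 * j + 1))"
  unfolding weakly_null_def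
proof (intro allI impI)
  fix f :: "'a \<Rightarrow> real" assume f: "bounded_linear f"
  then obtain L where L: "(\<lambda>n. f (z n)) \<longlonglongrightarrow> L"
    using assms unfolding weakly_Cauchy_def convergent_def by blast
  have "(\<lambda>j. f (z (2 * j))) \<longlonglongrightarrow> L" "(\<lambda>j. f (z (2 * j + 1))) \<longlonglongrightarrow> L"
    using LIMSEQ_subseq_LIMSEQ[OF L, of "\<lambda>j. 2 * j"] LIMSEQ_subseq_LIMSEQ[OF L, of "\<lambda>j. 2 * j + 1"]
    by (simp_all add: strict_mono_def o_def)
  then have "(\<lambda>j. f (z (2 * j)) - f (z (2 * j + 1))) \<longlonglongrightarrow> L - L" by (rule tendsto_diff)
  then show "(\<lambda>j. f (z (2 * j) - z (2 * j + 1))) \<longlonglongrightarrow> 0"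
    using linear_diff[OF bounded_linear.linear[OF f]] by simp
qed

lemma strict_mono_interleave:
  assumes "strict_mono (s :: nat \<Rightarrow> nat)"
  shows "strict_mono (\<lambda>m. 2 * s (m div 2) + m mod 2)"
  unfolding strict_mono_Suc_iff
proof
  fix m
  show "2 * s (m div 2) + m mod 2 < 2 * s (Suc m div 2) + Suc m mod 2"
  proof (cases "even m")
    case False
    then obtain j where "m = 2 * j + 1" by (auto elim: oddE)
    moreover have "s j < s (Suc j)" using assms by (simp add: strict_mono_Suc_iff)
    ultimately show ?thesis by simp
  qed (auto elim: evenE)
qed

text \<open>The signs (-1)^m along the interleaved indices 2 s j, 2 s j + 1 pair up consecutive
  terms into the differences of the weakly null sequence.\<close>
lemma alternating_interleave_partial_sums_bound:
  fixes z :: "nat \<Rightarrow> 'a::real_normed_vector"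
  assumes K: "\<And>n. norm (z n) \<le> K" and "0 \<le> D" "0 \<le> \<theta>"
    and pairs: "\<And>J. norm (\<Sum>j<J. z (2 * s j) - z (2 * s j + 1)) \<le> D * real J powr \<theta>"
  shows "norm (\<Sum>m<n. (-1::real)^m *\<^sub>R z (2 * s (m div 2) + m mod 2)) \<le> D * real n powr \<theta> + K"
proof -
  define a where "a m = (-1::real)^m *\<^sub>R z (2 * s (m div 2) + m mod 2)" for m
  have even_sum: "(\<Sum>m<2 * J. a m) = (\<Sum>j<J. z (2 * s j) - z (2 * s j + 1))" for J
  proof (induction J)
    case (Suc J)
    have "2 * Suc J = Suc (Suc (2 * J))" by simp
    moreover have "a (2 * J) = z (2 * s J)" "a (Suc (2 * J)) = - z (2 * s J + 1)"
      by (simp_all add: a_def)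
    ultimately show ?case using Suc by simp
  qed simp
  have "norm (\<Sum>m<2 * (n div 2). a m) \<le> D * real n powr \<theta>"
    using pairs[of "n div 2"] mult_left_mono[OF powr_mono2[of \<theta> "real (n div 2)" "real n"] \<open>0 \<le> D\<close>]
      \<open>0 \<le> \<theta>\<close> unfolding even_sum by simp
  moreover have "norm (\<Sum>m<n. a m) \<le> norm (\<Sum>m<2 * (n div 2). a m) + K"
  proof (cases "even n")
    case True
    have "0 \<le> K" using norm_ge_zero[of "z 0"] K[of 0] by linarith
    with True show ?thesis by simp
  next
    case False
    then have "n = Suc (2 * (n div 2))" by simp
    then have "(\<Sum>m<n. a m) = (\<Sum>m<2 * (n div 2). a m) + a (2 * (n div 2))"
      by (metis sum.lessThan_Suc)
    moreover have "norm (a (2 * (n div 2))) \<le> K" using K by (simp add: a_def)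
    ultimately show ?thesis by (metis add_left_mono norm_triangle_ineq order_trans)
  qed
  ultimately show ?thesis unfolding a_def by linarith
qed

lemma weak_limit_of_weakly_Cauchy:
  fixes z :: "nat \<Rightarrow> 'a::real_normed_vector"
  assumes "reflexive_space TYPE('a)" "bounded (range z)" "weakly_Cauchy z"
  obtains x0 where "weakly_null (\<lambda>n. z n - x0)"
proof -
  obtain K where K: "\<And>n. norm (z n) \<le> K" using assms(2) unfolding bounded_iff by auto
  define \<phi> where "\<phi> f = lim (\<lambda>n. blinfun_apply f (z n))" for f :: "'a \<Rightarrow>\<^sub>L real"
  have lim: "(\<lambda>n. blinfun_apply f (z n)) \<longlonglongrightarrow> \<phi> f" for f
    using assms(3) blinfun.bounded_linear_right[of f]
    unfolding \<phi>_def weakly_Cauchy_def by (simp add: convergent_LIMSEQ_iff)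
  have "bounded_linear \<phi>"
  proof (rule bounded_linear_intro[where K = K])
    show "\<phi> (f + g) = \<phi> f + \<phi> g" for f g
      using tendsto_add[OF lim[of f] lim[of g]] lim[of "f + g"] LIMSEQ_unique
      by (simp add: plus_blinfun.rep_eq)
    show "\<phi> (c *\<^sub>R f) = c *\<^sub>R \<phi> f" for c f
      using tendsto_scaleR[OF tendsto_const lim[of f], of c] lim[of "c *\<^sub>R f"] LIMSEQ_unique
      by (simp add: scaleR_blinfun.rep_eq)
    show "norm (\<phi> f) \<le> norm f * K" for f
    proof (rule LIMSEQ_le_const2[OF tendsto_norm[OF lim[of f]]])
      show "\<exists>N. \<forall>n\<ge>N. norm (blinfun_apply f (z n)) \<le> norm f * K"
        using order_trans[OF norm_blinfun mult_left_mono[OF K norm_ge_zero]] by blast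
    qed
  qed
  obtain x0 where "\<forall>f. blinfun_apply (Blinfun \<phi>) f = blinfun_apply f x0"
    using assms(1) unfolding reflexive_space_def by blast
  then have x0: "\<phi> f = blinfun_apply f x0" for f
    using bounded_linear_Blinfun_apply[OF \<open>bounded_linear \<phi>\<close>] by simp
  have "weakly_null (\<lambda>n. z n - x0)"
    unfolding weakly_null_def
  proof (intro allI impI)
    fix g :: "'a \<Rightarrow> real" assume g: "bounded_linear g"
    have "(\<lambda>n. g (z n)) \<longlonglongrightarrow> g x0"
      using lim[of "Blinfun g"] x0[of "Blinfun g"] bounded_linear_Blinfun_apply[OF g] by simp
    then have "(\<lambda>n. g (z n) - g x0) \<longlonglongrightarrow> 0" by (simp add: LIM_zero)
    then show "(\<lambda>n. g (z n - x0)) \<longlonglongrightarrow> 0" using linear_diff[OF bounded_linear.linear[OF g]] by simp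
  qed
  with that show thesis .
qed

lemma alternating_Banach_Saks_if_p_Banach_Saks:
  assumes "1 < p" "p_Banach_Saks p TYPE('a::banach)" "\<not> contains_ell1 TYPE('a)"
  shows "alternating_Banach_Saks TYPE('a)"
  unfolding alternating_Banach_Saks_def
proof (intro allI impI)
  fix x :: "nat \<Rightarrow> 'a" assume "bounded (range x)"
  then obtain K where K: "\<And>n. norm (x n) \<le> K" unfolding bounded_iff by auto
  obtain r where r: "strict_mono r" "weakly_Cauchy (x \<circ> r)"
    using rosenthal_ell1_theorem[OF assms(3) \<open>bounded (range x)\<close>] by blast
  define z where "z = x \<circ> r"
  define y where "y j = z (2 * j) - z (2 * j + 1)" for j
  have "norm (y j) \<le> 2 * K" for j
    using norm_triangle_ineq4[of "z (2 * j)" "z (2 * j + 1)"] K[of "r (2 * j)"] K[of "r (2 * j + 1)"]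
    unfolding y_def z_def by simp
  then have "bounded (range y)" unfolding bounded_iff by blast
  then obtain s D \<theta> where s: "strict_mono s" "0 \<le> D" "0 \<le> \<theta>" "\<theta> < 1"
    "\<And>J. norm (\<Sum>j<J. y (s j)) \<le> D * real J powr \<theta>"
    using weakly_null_subsequence_partial_sums_powr_bound[OF assms(1,2)]
      weakly_null_pair_differences[OF r(2)] unfolding y_def z_def by blast
  define \<rho> where "\<rho> m = 2 * s (m div 2) + m mod 2" for m
  have "norm (\<Sum>m\<le>k. (-1::real)^m *\<^sub>R x ((r \<circ> \<rho>) m)) \<le> D * real (Suc k) powr \<theta> + K" for k
    using alternating_interleave_partial_sums_bound[of z K D \<theta> s "Suc k"] K s(2,3,5)
    unfolding \<rho>_def y_def z_def lessThan_Suc_atMost by simp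
  then have "(\<lambda>k. (1 / real (Suc k)) *\<^sub>R (\<Sum>m\<le>k. (-1::real)^m *\<^sub>R x ((r \<circ> \<rho>) m))) \<longlonglongrightarrow> 0"
    using s(4) by (rule Cesaro_means_tendsto_zero)
  moreover have "strict_mono (r \<circ> \<rho>)"
    using strict_mono_o[OF r(1) strict_mono_interleave[OF s(1)]] unfolding \<rho>_def .
  moreover have "\<forall>j. (-1::real)^j \<in> {-1, 1}" by (auto simp: minus_one_power_iff)
  ultimately show "\<exists>r \<epsilon>. strict_mono r \<and> (\<forall>j. \<epsilon> j \<in> {-1, 1::real}) \<and>
      convergent (\<lambda>k. (1 / real (Suc k)) *\<^sub>R (\<Sum>j\<le>k. \<epsilon> j *\<^sub>R x (r j)))"
    unfolding convergent_def by blast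
qed

lemma Banach_Saks_if_p_Banach_Saks:
  assumes "1 < p" "p_Banach_Saks p TYPE('a::banach)" "\<not> contains_ell1 TYPE('a)"
    and "reflexive_space TYPE('a)"
  shows "Banach_Saks TYPE('a)"
  unfolding Banach_Saks_def
proof (intro allI impI)
  fix x :: "nat \<Rightarrow> 'a" assume "bounded (range x)"
  obtain r where r: "strict_mono r" "weakly_Cauchy (x \<circ> r)"
    using rosenthal_ell1_theorem[OF assms(3) \<open>bounded (range x)\<close>] by blast
  have "bounded (range (x \<circ> r))" using \<open>bounded (range x)\<close> by (rule bounded_subset) auto
  then obtain x0 where "weakly_null (\<lambda>n. (x \<circ> r) n - x0)"
    using weak_limit_of_weakly_Cauchy[OF assms(4) _ r(2)] by blast
  define u where "u n = x (r n) - x0" for n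
  have "weakly_null u" using \<open>weakly_null (\<lambda>n. (x \<circ> r) n - x0)\<close> unfolding u_def by simp
  moreover obtain K where K: "\<And>n. norm (x n) \<le> K"
    using \<open>bounded (range x)\<close> unfolding bounded_iff by auto
  have "norm (u n) \<le> K + norm x0" for n
    using norm_triangle_ineq4[of "x (r n)" x0] K[of "r n"] unfolding u_def by simp
  then have "bounded (range u)" unfolding bounded_iff by blast
  ultimately obtain s D \<theta> where s: "strict_mono s" "\<theta> < 1"
    "\<And>J. norm (\<Sum>j<J. u (s j)) \<le> D * real J powr \<theta>"
    using weakly_null_subsequence_partial_sums_powr_bound[OF assms(1,2)] by metis
  have "norm (\<Sum>j\<le>k. u (s j)) \<le> D * real (Suc k) powr \<theta> + 0" for k
    using s(3)[of "Suc k"] unfolding lessThan_Suc_atMost by simp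
  then have "(\<lambda>k. (1 / real (Suc k)) *\<^sub>R (\<Sum>j\<le>k. u (s j))) \<longlonglongrightarrow> 0"
    using s(2) by (rule Cesaro_means_tendsto_zero)
  then have "(\<lambda>k. x0 + (1 / real (Suc k)) *\<^sub>R (\<Sum>j\<le>k. u (s j))) \<longlonglongrightarrow> x0 + 0"
    by (intro tendsto_add tendsto_const)
  moreover have "x0 + (1 / real (Suc k)) *\<^sub>R (\<Sum>j\<le>k. u (s j))
      = (1 / real (Suc k)) *\<^sub>R (\<Sum>j\<le>k. x ((r \<circ> s) j))" for k
    unfolding u_def by (simp add: sum_subtractf scaleR_diff_right sum_constant_scaleR)
  ultimately have "convergent (\<lambda>k. (1 / real (Suc k)) *\<^sub>R (\<Sum>j\<le>k. x ((r \<circ> s) j)))"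
    unfolding convergent_def by auto
  with strict_mono_o[OF r(1) s(1)] show
    "\<exists>r. strict_mono r \<and> convergent (\<lambda>k. (1 / real (Suc k)) *\<^sub>R (\<Sum>j\<le>k. x (r j)))"
    by blast
qed

theorem proposition3p1:
  fixes p :: real
  assumes "1 < p"
    and "p_Banach_Saks p TYPE('a::banach)"
    and "\<not> contains_ell1 TYPE('a)"
  shows "alternating_Banach_Saks TYPE('a)
    \<and> (reflexive_space TYPE('a) \<longrightarrow> Banach_Saks TYPE('a))"
  using alternating_Banach_Saks_if_p_Banach_Saks[OF assms]
    Banach_Saks_if_p_Banach_Saks[OF assms] by blast

end
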